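(* Let $G$ be a finite simple connected graph of order $n\ge 3$. Then $W_3(G)\ge \frac{n-2}{2}W(G)$. Equality holds if and only if $G$ contains no three vertices $u,v,w$ such that $2\max\{d(u,v),d(u,w),d(v,w)\}<d(u,v)+d(u,w)+d(v,w)$ and every choice of three shortest paths between the three pairs $(u,v),(v,w),(w,u)$ consists of pairwise edge-disjoint paths.
   Context: $d(u,v)$ is the graph distance and $W(G)=\sum_{\{u,v\}\subseteq V}d(u,v)$ is the Wiener index. For a set $S$ of vertices, the Steiner distance $d_3(S)$ (for $|S|=3$) is the minimum number of edges of a connected subgraph (equivalently a subtree) of $G$ containing $S$, and $W_3(G)=\sum_{S\subseteq V,\,|S|=3}d_3(S)$. *)

theory Defs
  imports Complex_Main
begin

definition simple_graph :: "'a set \<Rightarrow> 'a set set \<Rightarrow> bool" where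
  "simple_graph V E \<longleftrightarrow> finite V \<and> (\<forall>e\<in>E. e \<subseteq> V \<and> card e = 2)"

definition walk :: "'a set set \<Rightarrow> 'a list \<Rightarrow> 'a \<Rightarrow> 'a \<Rightarrow> bool" where
  "walk F p u v \<longleftrightarrow> p \<noteq> [] \<and> hd p = u \<and> last p = v \<and>
     (\<forall>i. Suc i < length p \<longrightarrow> {p ! i, p ! Suc i} \<in> F)"

definition connected_graph :: "'a set \<Rightarrow> 'a set set \<Rightarrow> bool" where
  "connected_graph V E \<longleftrightarrow> V \<noteq> {} \<and> (\<forall>u\<in>V. \<forall>v\<in>V. \<exists>p. walk E p u v)"

definition dist :: "'a set set \<Rightarrow> 'a \<Rightarrow> 'a \<Rightarrow> nat" where
  "dist E u v = (LEAST k. \<exists>p. walk E p u v \<and> length p = Suc k)"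

definition shortest_path :: "'a set set \<Rightarrow> 'a list \<Rightarrow> 'a \<Rightarrow> 'a \<Rightarrow> bool" where
  "shortest_path E p u v \<longleftrightarrow> walk E p u v \<and> length p = Suc (dist E u v)"

definition path_edges :: "'a list \<Rightarrow> 'a set set" where
  "path_edges p = {{p ! i, p ! Suc i} | i. Suc i < length p}"

definition steiner_dist :: "'a set \<Rightarrow> 'a set set \<Rightarrow> 'a set \<Rightarrow> nat" where
  "steiner_dist V E S = Min {card F | U F. U \<subseteq> V \<and> F \<subseteq> E \<and> (\<forall>e\<in>F. e \<subseteq> U) \<and> S \<subseteq> U \<and>
       (\<forall>x\<in>U. \<forall>y\<in>U. \<exists>p. walk F p x y)}"

text \<open>Wiener index: sum of distances over unordered pairs (= half the ordered double sum).\<close>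
definition wiener :: "'a set \<Rightarrow> 'a set set \<Rightarrow> real" where
  "wiener V E = (\<Sum>u\<in>V. \<Sum>v\<in>V. real (dist E u v)) / 2"

definition wiener3 :: "'a set \<Rightarrow> 'a set set \<Rightarrow> real" where
  "wiener3 V E = (\<Sum>S\<in>{S. S \<subseteq> V \<and> card S = 3}. real (steiner_dist V E S))"

end

theory Submission
  imports Defs
begin

text \<open>For a triple {u, v, w}, a smallest connected subgraph containing it contains a vertex x
  with d(x,u) + d(x,v) + d(x,w) at most its number of edges, and conversely three shortest paths
  issued from any vertex x span the triple. With the triangle inequality this gives
  2 d3({u,v,w}) \<ge> d(u,v) + d(v,w) + d(u,w), with equality iff the triple has a median, a vertex
  lying on shortest paths between all three pairs. Each pair of vertices lies in n - 2 triples,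
  so W3 - (n - 2)/2 W is the sum over all triples of these nonnegative gaps. Finally, every triple
  has a median iff there is no disjoint geodesic triangle: if two shortest paths issued from a
  corner of a median-free triple share an edge, moving that corner to the far end of the shared
  edge gives a median-free triple of smaller perimeter.\<close>

section \<open>Walks and their edges\<close>

lemma walk_singleton [simp]: "walk F [x] a b \<longleftrightarrow> x = a \<and> x = b"
  unfolding walk_def by auto

lemma not_walk_Nil [simp]: "\<not> walk F [] a b"
  unfolding walk_def by auto

lemma walk_Cons_Cons:
  "walk F (x # y # p) a b \<longleftrightarrow> x = a \<and> {x, y} \<in> F \<and> walk F (y # p) y b"
  unfolding walk_def by (auto simp: less_Suc_eq_0_disj)

lemma walk_length_pos: "walk F p a b \<Longrightarrow> length p = Suc (length p - 1)"
  unfolding walk_def by (cases p) auto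

lemma walk_endpoints_in_set: "walk F p a b \<Longrightarrow> a \<in> set p \<and> b \<in> set p"
  unfolding walk_def by auto

lemma walk_mono: "F \<subseteq> F' \<Longrightarrow> walk F p a b \<Longrightarrow> walk F' p a b"
  unfolding walk_def by blast

lemma walk_append: "walk F p a b \<Longrightarrow> walk F q b c \<Longrightarrow> walk F (p @ tl q) a c"
proof (induction p arbitrary: a rule: induct_list012)
  case (2 x)
  then show ?case by (cases q) (auto simp: walk_def)
next
  case (3 x y p)
  then show ?case by (auto simp: walk_Cons_Cons)
qed simp

lemma walk_rev: "walk F p a b \<Longrightarrow> walk F (rev p) b a"
proof (induction p arbitrary: a rule: induct_list012)
  case (3 x y p)
  then have "x = a" "{y, x} \<in> F" "walk F (y # p) y b"
    by (auto simp: walk_Cons_Cons insert_commute)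
  with "3.IH" have "walk F (rev (y # p)) b y" "walk F [y, x] y x"
    by (auto simp: walk_Cons_Cons)
  from walk_append[OF this] show ?case
    using \<open>x = a\<close> by simp
qed simp_all

lemma walk_take: "walk F p a b \<Longrightarrow> i < length p \<Longrightarrow> walk F (take (Suc i) p) a (p ! i)"
proof -
  assume "walk F p a b" "i < length p"
  moreover have "last (take (Suc i) p) = p ! i"
    using \<open>i < length p\<close> by (simp add: take_Suc_conv_app_nth)
  ultimately show ?thesis
    unfolding walk_def by (auto simp: hd_take)
qed

lemma walk_drop: "walk F p a b \<Longrightarrow> i < length p \<Longrightarrow> walk F (drop i p) (p ! i) b"
  unfolding walk_def by (auto simp: hd_drop_conv_nth last_drop)

lemma walk_remdups:
  assumes "walk F p a b"
  obtains q where "walk F q a b" "distinct q" "set q \<subseteq> set p"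
  using assms
proof (induction "length p" arbitrary: p rule: less_induct)
  case less
  show ?case
  proof (cases "distinct p")
    case True
    with less.prems show ?thesis by blast
  next
    case False
    then obtain i j where ij: "i < j" "j < length p" "p ! i = p ! j"
      by (metis distinct_conv_nth linorder_neqE_nat)
    define p' where "p' = take (Suc i) p @ tl (drop j p)"
    have "walk F (take (Suc i) p) a (p ! i)" "walk F (drop j p) (p ! i) b"
      using ij walk_take[OF less.prems(2), of i] walk_drop[OF less.prems(2), of j] by auto
    then have "walk F p' a b"
      unfolding p'_def by (rule walk_append)
    moreover have "length p' < length p"
      using ij unfolding p'_def by simp
    moreover have "set p' \<subseteq> set p"
      unfolding p'_def using set_take_subset[of "Suc i" p] set_drop_subset[of j p]
        list.set_sel(2)[of "drop j p"] by (cases "drop j p") auto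
    ultimately show ?thesis
      using less.hyps[of p'] less.prems(1) by blast
  qed
qed

lemma path_edges_conv_image: "path_edges p = (\<lambda>i. {p ! i, p ! Suc i}) ` {..<length p - 1}"
  unfolding path_edges_def by auto

lemma card_path_edges_le: "card (path_edges p) \<le> length p - 1"
  unfolding path_edges_conv_image using card_image_le[of "{..<length p - 1}"] by simp

lemma card_path_edges_distinct:
  assumes "distinct p"
  shows "card (path_edges p) = length p - 1"
proof -
  have "inj_on (\<lambda>i. {p ! i, p ! Suc i}) {..<length p - 1}"
  proof
    fix i j assume "i \<in> {..<length p - 1}" "j \<in> {..<length p - 1}"
      and e: "{p ! i, p ! Suc i} = {p ! j, p ! Suc j}"
    then have "i = j \<or> i = Suc j" "Suc i = j \<or> Suc i = Suc j"
      using assms by (auto simp: doubleton_eq_iff nth_eq_iff_index_eq)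
    then show "i = j" by auto
  qed
  then show ?thesis
    unfolding path_edges_conv_image by (simp add: card_image)
qed

lemma path_edges_subset: "walk F p a b \<Longrightarrow> path_edges p \<subseteq> F"
  unfolding walk_def path_edges_def by blast

lemma walk_path_edges: "walk F p a b \<Longrightarrow> walk (path_edges p) p a b"
  unfolding walk_def path_edges_def by blast

lemma path_edge_subset_set: "e \<in> path_edges p \<Longrightarrow> e \<subseteq> set p"
  unfolding path_edges_def by auto

lemma walk_path_edges_to_member:
  assumes "walk F p a b" "y \<in> set p"
  shows "\<exists>q. walk (path_edges p) q a y"
proof -
  obtain k where "k < length p" "p ! k = y"
    using assms(2) by (meson in_set_conv_nth)
  then show ?thesis
    using walk_take[OF walk_path_edges[OF assms(1)], of k] by auto
qed

lemma path_edges_rev [simp]: "path_edges (rev p) = path_edges p"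
proof -
  have "path_edges p \<subseteq> path_edges (rev p)" for p :: "'a list"
  proof
    fix e assume "e \<in> path_edges p"
    then obtain i where i: "Suc i < length p" "e = {p ! i, p ! Suc i}"
      unfolding path_edges_def by blast
    define j where "j = length p - 2 - i"
    have "rev p ! j = p ! Suc i" "rev p ! Suc j = p ! i" and j: "Suc j < length (rev p)"
      using i unfolding j_def by (simp_all add: rev_nth Suc_diff_Suc)
    then have "e = {rev p ! j, rev p ! Suc j}"
      using i by (auto simp: insert_commute)
    with j show "e \<in> path_edges (rev p)"
      unfolding path_edges_def by blast
  qed
  from this[of p] this[of "rev p"] show ?thesis by simp
qed

lemma path_edges_append_left: "path_edges p \<subseteq> path_edges (p @ q)"
  unfolding path_edges_def by (force simp: nth_append)

lemma path_edges_append_right: "path_edges q \<subseteq> path_edges (p @ q)"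
proof
  fix e assume "e \<in> path_edges q"
  then obtain i where "Suc i < length q" "e = {q ! i, q ! Suc i}"
    unfolding path_edges_def by blast
  then have "Suc (length p + i) < length (p @ q)"
    "e = {(p @ q) ! (length p + i), (p @ q) ! Suc (length p + i)}"
    by (simp_all add: nth_append)
  then show "e \<in> path_edges (p @ q)"
    unfolding path_edges_def by blast
qed

lemma path_edges_append_tl:
  assumes "walk F p a b" "walk F' q b c"
  shows "path_edges p \<union> path_edges q \<subseteq> path_edges (p @ tl q)"
proof -
  have "p @ tl q = butlast p @ q"
    using assms unfolding walk_def
    by (metis append_butlast_last_id append_Cons append_assoc append_Nil list.collapse)
  then show ?thesis
    using path_edges_append_left[of p "tl q"] path_edges_append_right[of q "butlast p"] by auto
qed

lemma path_edges_take_disjoint: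
  assumes "\<forall>k<j. q ! k \<notin> set p"
  shows "path_edges (take (Suc j) q) \<inter> path_edges p = {}"
proof -
  have "\<not> e \<subseteq> set p" if "e \<in> path_edges (take (Suc j) q)" for e
  proof -
    have "\<exists>k<j. e = {q ! k, q ! Suc k}"
      using that unfolding path_edges_def by auto
    with assms show ?thesis by auto
  qed
  then show ?thesis
    using path_edge_subset_set by blast
qed

lemma walk_first_meeting:
  assumes "walk F q w v" "v \<in> set p"
  obtains j where "j < length q" "q ! j \<in> set p"
    "path_edges (take (Suc j) q) \<inter> path_edges p = {}"
proof -
  have "q ! (length q - 1) \<in> set p" "length q - 1 < length q"
    using assms by (auto simp: walk_def last_conv_nth)
  then have "\<exists>j. j < length q \<and> q ! j \<in> set p"
    by blast
  from exists_least_iff[THEN iffD1, OF this] obtain j where j: "j < length q" "q ! j \<in> set p"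
    and "\<forall>k<j. \<not> (k < length q \<and> q ! k \<in> set p)"
    by blast
  then have "\<forall>k<j. q ! k \<notin> set p"
    by auto
  with j that show ?thesis
    using path_edges_take_disjoint by blast
qed

section \<open>Graph distance\<close>

lemma graph_dist_le_length: "walk E p u v \<Longrightarrow> dist E u v \<le> length p - 1"
  unfolding Defs.dist_def by (rule Least_le) (metis walk_length_pos)

lemma shortest_path_exists:
  assumes "walk E p u v"
  obtains P where "shortest_path E P u v"
proof -
  have "\<exists>k q. walk E q u v \<and> length q = Suc k"
    using assms by (metis walk_length_pos)
  from LeastI_ex[OF this] show ?thesis
    using that unfolding shortest_path_def Defs.dist_def by blast
qed

lemma shortest_path_walk: "shortest_path E P u v \<Longrightarrow> walk E P u v"
  and length_shortest_path: "shortest_path E P u v \<Longrightarrow> length P = Suc (dist E u v)"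
  unfolding shortest_path_def by simp_all

lemma graph_dist_self [simp]: "dist E u u = 0"
  using graph_dist_le_length[of E "[u]" u u] by simp

text \<open>Without a walk between u and v both distances are the junk value LEAST of an empty
  predicate, so symmetry needs no connectivity.\<close>
lemma graph_dist_commute: "dist E u v = dist E v u"
proof -
  have le: "dist E v u \<le> dist E u v" if "\<exists>p. walk E p u v" for u v
  proof -
    from that obtain p where "walk E p u v" ..
    then obtain P where P: "shortest_path E P u v"
      by (rule shortest_path_exists)
    show ?thesis
      using graph_dist_le_length[OF walk_rev[OF shortest_path_walk[OF P]]]
        length_shortest_path[OF P] by simp
  qed
  show ?thesis
  proof (cases "\<exists>p. walk E p u v")
    case True
    then have "\<exists>p. walk E p v u" by (meson walk_rev)
    with True show ?thesis using le by (simp add: antisym)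
  next
    case False
    then have "\<not> (\<exists>p. walk E p v u)" by (meson walk_rev)
    with False show ?thesis unfolding Defs.dist_def by simp
  qed
qed

lemma shortest_path_rev: "shortest_path E P u v \<Longrightarrow> shortest_path E (rev P) v u"
  unfolding shortest_path_def using walk_rev[of E P u v] graph_dist_commute[of E u v] by simp

lemma graph_dist_eq_0_iff:
  assumes "walk E p u v"
  shows "dist E u v = 0 \<longleftrightarrow> u = v"
proof
  assume "dist E u v = 0"
  moreover obtain P where "shortest_path E P u v"
    using shortest_path_exists[OF assms] .
  ultimately have "walk E P u v" "length P = Suc 0"
    unfolding shortest_path_def by simp_all
  moreover from this(2) have "P = [hd P]"
    by (cases P) simp_all
  ultimately show "u = v"
    by (metis walk_singleton)
qed simp

lemma graph_dist_triangle:
  assumes "walk E p u v" "walk E q v w"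
  shows "dist E u w \<le> dist E u v + dist E v w"
proof -
  obtain P Q where "shortest_path E P u v" "shortest_path E Q v w"
    using shortest_path_exists[OF assms(1)] shortest_path_exists[OF assms(2)] by metis
  moreover from this have "walk E (P @ tl Q) u w"
    by (blast intro: walk_append shortest_path_walk)
  ultimately show ?thesis
    using graph_dist_le_length[of E "P @ tl Q"] length_shortest_path[of E] by simp
qed

lemma shortest_path_append:
  assumes "shortest_path E P u x" "shortest_path E Q x v"
    and "dist E u x + dist E x v = dist E u v"
  shows "shortest_path E (P @ tl Q) u v"
proof -
  have "walk E (P @ tl Q) u v"
    using assms by (blast intro: walk_append shortest_path_walk)
  moreover have "length (P @ tl Q) = Suc (dist E u v)"
    using assms length_shortest_path[of E] by simp
  ultimately show ?thesis
    unfolding shortest_path_def by blast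
qed

lemma graph_dist_shortest_path_nth:
  assumes P: "shortest_path E P s t" and i: "i < length P"
  shows "dist E s (P ! i) = i" and "dist E (P ! i) t = dist E s t - i"
proof -
  have w: "walk E P s t" and l: "length P = Suc (dist E s t)"
    using P unfolding shortest_path_def by auto
  have "dist E s (P ! i) \<le> i"
    using graph_dist_le_length[OF walk_take[OF w i]] i by simp
  moreover have "dist E (P ! i) t \<le> length P - 1 - i"
    using graph_dist_le_length[OF walk_drop[OF w i]] by simp
  moreover have "dist E s t \<le> dist E s (P ! i) + dist E (P ! i) t"
    using graph_dist_triangle[OF walk_take[OF w i] walk_drop[OF w i]] .
  ultimately show "dist E s (P ! i) = i" "dist E (P ! i) t = dist E s t - i"
    using l i by linarith+
qed

text \<open>Follow a u-v path in F, and a w-v path in F up to the first vertex x where it meets the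
  first path: the two pieces are edge-disjoint and witness the three distances to x.\<close>
lemma card_ge_dist_sum_via_walks:
  assumes "finite F" "F \<subseteq> E" "walk F p u v" "walk F q w v"
  shows "\<exists>x\<in>set p. dist E x u + dist E x v + dist E x w \<le> card F"
proof -
  obtain P where P: "walk F P u v" "distinct P" "set P \<subseteq> set p"
    using walk_remdups[OF assms(3)] .
  obtain q' where q': "walk F q' w v" "distinct q'"
    by (rule walk_remdups[OF assms(4)])
  obtain j where j: "j < length q'" "q' ! j \<in> set P"
    and disjoint: "path_edges (take (Suc j) q') \<inter> path_edges P = {}"
    using walk_first_meeting[OF q'(1)] walk_endpoints_in_set[OF P(1)] by blast
  define x where "x = q' ! j"
  define Q where "Q = take (Suc j) q'"
  obtain i where i: "i < length P" "P ! i = x"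
    using j(2) unfolding x_def by (metis in_set_conv_nth)
  have Q: "walk F Q w x" "distinct Q" "length Q = Suc j"
    unfolding Q_def x_def using walk_take[OF q'(1) j(1)] q'(2) j(1) by simp_all
  have PE: "walk E P u v" and QE: "walk E Q w x"
    using assms(2) P(1) Q(1) by (blast intro: walk_mono)+
  have "dist E u x + dist E x v \<le> length P - 1"
    using graph_dist_le_length[OF walk_take[OF PE i(1)]]
      graph_dist_le_length[OF walk_drop[OF PE i(1)]] i by simp
  moreover have "dist E w x \<le> j"
    using graph_dist_le_length[OF QE] Q(3) by simp
  moreover have "card (path_edges P) + card (path_edges Q) \<le> card F"
  proof -
    have "path_edges Q \<inter> path_edges P = {}"
      unfolding Q_def by (rule disjoint)
    moreover have sub: "path_edges P \<union> path_edges Q \<subseteq> F"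
      using path_edges_subset[OF P(1)] path_edges_subset[OF Q(1)] by blast
    moreover have "finite (path_edges P)" "finite (path_edges Q)"
      using sub assms(1) finite_subset by blast+
    ultimately have "card (path_edges P \<union> path_edges Q) = card (path_edges P) + card (path_edges Q)"
      by (simp add: card_Un_disjoint Int_commute)
    with card_mono[OF assms(1) sub] show ?thesis
      by simp
  qed
  moreover have "x \<in> set p"
    using i P(3) nth_mem by blast
  ultimately show ?thesis
    using card_path_edges_distinct[OF P(2)] card_path_edges_distinct[OF Q(2)] Q(3)
      graph_dist_commute[of E u x] graph_dist_commute[of E w x]
    by (intro bexI[of _ x]) auto
qed

text \<open>Along a shortest path from s the i-th vertex is at distance i from s, so a common edge
  sits at the same position in both paths.\<close>
lemma shortest_paths_common_edge:
  assumes P: "shortest_path E P s t" and Q: "shortest_path E Q s t'"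
    and e: "e \<in> path_edges P" "e \<in> path_edges Q"
  obtains a where "a \<in> set P" "a \<noteq> s"
    "dist E s a + dist E a t = dist E s t" "dist E s a + dist E a t' = dist E s t'"
proof -
  obtain i where i: "Suc i < length P" "e = {P ! i, P ! Suc i}"
    using e(1) unfolding path_edges_def by blast
  obtain j where j: "Suc j < length Q" "e = {Q ! j, Q ! Suc j}"
    using e(2) unfolding path_edges_def by blast
  note dP = graph_dist_shortest_path_nth[OF P] and dQ = graph_dist_shortest_path_nth[OF Q]
  have "P ! Suc i = Q ! Suc j"
    using i j dP(1)[of i] dP(1)[of "Suc i"] dQ(1)[of j] dQ(1)[of "Suc j"]
    by (auto simp: doubleton_eq_iff)
  moreover have "Suc i \<le> dist E s t" "Suc j \<le> dist E s t'"
    using i(1) j(1) length_shortest_path[OF P] length_shortest_path[OF Q] by simp_all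
  moreover have "P ! Suc i \<in> set P" "P ! Suc i \<noteq> s"
    using i(1) dP(1)[of "Suc i"] by auto
  ultimately show ?thesis
    using that[of "P ! Suc i"] i(1) j(1) dP[of "Suc i"] dQ[of "Suc j"] by simp
qed

section \<open>Counting pairs in triples\<close>

lemma card_triples_containing_pair:
  assumes "finite V" "a \<in> V" "b \<in> V" "a \<noteq> b"
  shows "card {S. S \<subseteq> V \<and> card S = 3 \<and> a \<in> S \<and> b \<in> S} = card V - 2"
proof -
  have "{S. S \<subseteq> V \<and> card S = 3 \<and> a \<in> S \<and> b \<in> S} = (\<lambda>t. {a, b, t}) ` (V - {a, b})"
  proof (intro equalityI subsetI)
    fix S assume "S \<in> {S. S \<subseteq> V \<and> card S = 3 \<and> a \<in> S \<and> b \<in> S}"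
    then have S: "S \<subseteq> V" "card S = 3" "a \<in> S" "b \<in> S" by auto
    then have "card (S - {a, b}) = 1"
      using assms by (subst card_Diff_subset) auto
    then obtain t where "S - {a, b} = {t}"
      by (meson card_1_singletonE)
    with S show "S \<in> (\<lambda>t. {a, b, t}) ` (V - {a, b})"
      by (intro image_eqI[of _ _ t]) auto
  qed (use assms in auto)
  moreover have "inj_on (\<lambda>t. {a, b, t}) (V - {a, b})"
  proof (rule inj_onI)
    fix t t' assume t: "t \<in> V - {a, b}" and "{a, b, t} = {a, b, t'}"
    then have "t \<in> {a, b, t'}" by blast
    with t show "t = t'" by blast
  qed
  ultimately show ?thesis
    using assms by (simp add: card_image card_Diff_subset)
qed

lemma sum_restrict_square:
  fixes f :: "'a \<Rightarrow> 'a \<Rightarrow> real"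
  assumes "finite V" "S \<subseteq> V"
  shows "(\<Sum>a\<in>S. \<Sum>b\<in>S. f a b) = (\<Sum>a\<in>V. \<Sum>b\<in>V. if a \<in> S \<and> b \<in> S then f a b else 0)"
proof -
  have restrict: "sum g S = (\<Sum>x\<in>V. if x \<in> S then g x else 0)" for g :: "'a \<Rightarrow> real"
    using sum.inter_restrict[OF assms(1), of g S] assms(2) by (simp add: Int_absorb1)
  have "(\<Sum>a\<in>S. \<Sum>b\<in>S. f a b) = (\<Sum>a\<in>V. if a \<in> S then \<Sum>b\<in>V. if b \<in> S then f a b else 0 else 0)"
    unfolding restrict ..
  also have "\<dots> = (\<Sum>a\<in>V. \<Sum>b\<in>V. if a \<in> S \<and> b \<in> S then f a b else 0)"
    by (rule sum.cong[OF refl]) simp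
  finally show ?thesis .
qed

text \<open>Each pair of distinct vertices lies in exactly card V - 2 triples; pairs a = b do not
  contribute because f vanishes on the diagonal.\<close>
lemma sum_triples_pair_sums:
  fixes f :: "'a \<Rightarrow> 'a \<Rightarrow> real"
  assumes V: "finite V" and diag: "\<And>a. f a a = 0"
  shows "(\<Sum>S\<in>{S. S \<subseteq> V \<and> card S = 3}. \<Sum>a\<in>S. \<Sum>b\<in>S. f a b) =
    (real (card V) - 2) * (\<Sum>a\<in>V. \<Sum>b\<in>V. f a b)"
proof -
  let ?T = "{S. S \<subseteq> V \<and> card S = 3}"
  have fin: "finite ?T"
    using V by (auto intro: finite_subset[of _ "Pow V"])
  have "(\<Sum>S\<in>?T. \<Sum>a\<in>S. \<Sum>b\<in>S. f a b) =
      (\<Sum>S\<in>?T. \<Sum>a\<in>V. \<Sum>b\<in>V. if a \<in> S \<and> b \<in> S then f a b else 0)"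
    by (rule sum.cong[OF refl], rule sum_restrict_square[OF V]) simp
  also have "\<dots> = (\<Sum>a\<in>V. \<Sum>b\<in>V. \<Sum>S\<in>?T. if a \<in> S \<and> b \<in> S then f a b else 0)"
    by (subst sum.swap) (rule sum.cong[OF refl], rule sum.swap)
  also have "\<dots> = (\<Sum>a\<in>V. \<Sum>b\<in>V. real (card {S \<in> ?T. a \<in> S \<and> b \<in> S}) * f a b)"
    by (simp add: sum.inter_filter[OF fin, symmetric])
  also have "\<dots> = (\<Sum>a\<in>V. \<Sum>b\<in>V. (real (card V) - 2) * f a b)"
  proof (intro sum.cong refl)
    fix a b assume ab: "a \<in> V" "b \<in> V"
    show "real (card {S \<in> ?T. a \<in> S \<and> b \<in> S}) * f a b = (real (card V) - 2) * f a b"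
    proof (cases "a = b")
      case False
      then have "card {a, b} \<le> card V"
        using ab V by (intro card_mono) auto
      with False show ?thesis
        using card_triples_containing_pair[OF V ab False] by (simp add: of_nat_diff)
    qed (simp add: diag)
  qed
  finally show ?thesis
    by (simp add: sum_distrib_left)
qed

section \<open>Steiner distance of triples\<close>

lemma pair_sum_triple:
  assumes "u \<noteq> v" "v \<noteq> w" "u \<noteq> w"
  shows "(\<Sum>a\<in>{u, v, w}. \<Sum>b\<in>{u, v, w}. real (dist E a b)) =
    2 * real (dist E u v + dist E v w + dist E u w)"
  using assms graph_dist_commute[of E u v] graph_dist_commute[of E u w] graph_dist_commute[of E v w]
  by simp

locale connected_simple_graph =
  fixes V :: "'a set" and E :: "'a set set"
  assumes simple: "simple_graph V E" and connected: "connected_graph V E"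
begin

lemma finite_vertices: "finite V"
  using simple unfolding simple_graph_def by blast

lemma edge_subset_vertices: "e \<in> E \<Longrightarrow> e \<subseteq> V"
  using simple unfolding simple_graph_def by blast

lemma finite_edges: "finite E"
  using finite_vertices edge_subset_vertices by (meson Pow_iff finite_Pow_iff finite_subset subsetI)

lemma walk_exists: "u \<in> V \<Longrightarrow> v \<in> V \<Longrightarrow> \<exists>p. walk E p u v"
  using connected unfolding connected_graph_def by blast

lemma walk_subset_vertices:
  assumes "walk E p a b" "a \<in> V"
  shows "set p \<subseteq> V"
proof
  fix x assume "x \<in> set p"
  then obtain i where i: "i < length p" "p ! i = x"
    by (metis in_set_conv_nth)
  consider "Suc i < length p" | "i = 0" | k where "i = Suc k"
    by (cases i) auto
  then show "x \<in> V"
  proof cases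
    case 1
    then have "{p ! i, p ! Suc i} \<in> E"
      using assms(1) unfolding walk_def by blast
    with i show ?thesis using edge_subset_vertices by blast
  next
    case 2
    with i assms show ?thesis
      unfolding walk_def by (auto simp: hd_conv_nth)
  next
    case (3 k)
    then have "{p ! k, p ! i} \<in> E"
      using assms(1) i(1) unfolding walk_def by auto
    with i show ?thesis using edge_subset_vertices by blast
  qed
qed

lemma shortest_path_obtain:
  assumes "u \<in> V" "v \<in> V"
  obtains P where "shortest_path E P u v"
proof -
  from walk_exists[OF assms] obtain p where "walk E p u v" ..
  from shortest_path_exists[OF this] that show ?thesis by blast
qed

lemma dist_triangle_vertices:
  "u \<in> V \<Longrightarrow> v \<in> V \<Longrightarrow> w \<in> V \<Longrightarrow> dist E u w \<le> dist E u v + dist E v w"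
  using walk_exists graph_dist_triangle by metis

lemma dist_eq_0_iff_vertices: "u \<in> V \<Longrightarrow> v \<in> V \<Longrightarrow> dist E u v = 0 \<longleftrightarrow> u = v"
  using walk_exists graph_dist_eq_0_iff by metis

definition steiner_subgraph :: "'a set \<Rightarrow> 'a set set \<Rightarrow> 'a set \<Rightarrow> bool" where
  "steiner_subgraph U F S \<longleftrightarrow> U \<subseteq> V \<and> F \<subseteq> E \<and> (\<forall>e\<in>F. e \<subseteq> U) \<and> S \<subseteq> U \<and>
     (\<forall>x\<in>U. \<forall>y\<in>U. \<exists>p. walk F p x y)"

lemma steiner_dist_conv_Min: "steiner_dist V E S = Min {card F | U F. steiner_subgraph U F S}"
  unfolding steiner_dist_def steiner_subgraph_def by simp

lemma finite_steiner_subgraph_cards: "finite {card F | U F. steiner_subgraph U F S}"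
proof (rule finite_subset)
  show "{card F | U F. steiner_subgraph U F S} \<subseteq> {..card E}"
    using card_mono[OF finite_edges] unfolding steiner_subgraph_def by auto
qed simp

lemma steiner_dist_le: "steiner_subgraph U F S \<Longrightarrow> steiner_dist V E S \<le> card F"
  unfolding steiner_dist_conv_Min using finite_steiner_subgraph_cards by (intro Min_le) auto

lemma steiner_dist_attained:
  assumes "S \<subseteq> V"
  obtains U F where "steiner_subgraph U F S" "card F = steiner_dist V E S"
proof -
  have "steiner_subgraph V E S"
    unfolding steiner_subgraph_def using assms edge_subset_vertices walk_exists by blast
  then have "steiner_dist V E S \<in> {card F | U F. steiner_subgraph U F S}"
    unfolding steiner_dist_conv_Min using finite_steiner_subgraph_cards by (intro Min_in) auto
  with that show ?thesis by auto
qed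

text \<open>The union of three shortest paths issued from x is a connected subgraph containing
  u, v and w.\<close>
lemma steiner_dist_triple_le:
  assumes V: "x \<in> V" "u \<in> V" "v \<in> V" "w \<in> V"
  shows "steiner_dist V E {u, v, w} \<le> dist E x u + dist E x v + dist E x w"
proof -
  obtain A where A: "shortest_path E A x u"
    using shortest_path_obtain[OF V(1,2)] .
  obtain B where B: "shortest_path E B x v"
    using shortest_path_obtain[OF V(1,3)] .
  obtain C where C: "shortest_path E C x w"
    using shortest_path_obtain[OF V(1,4)] .
  note walks = shortest_path_walk[OF A] shortest_path_walk[OF B] shortest_path_walk[OF C]
  define F where "F = path_edges A \<union> path_edges B \<union> path_edges C"
  define U where "U = set A \<union> set B \<union> set C"
  have reach: "\<exists>p. walk F p x y" if "y \<in> U" for y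
    using that walk_path_edges_to_member[OF walks(1)] walk_path_edges_to_member[OF walks(2)]
      walk_path_edges_to_member[OF walks(3)] walk_mono[of _ F]
    unfolding U_def F_def by (meson Un_iff sup_ge1 sup_ge2 order_trans)
  have "steiner_subgraph U F {u, v, w}"
    unfolding steiner_subgraph_def
  proof (intro conjI ballI)
    show "U \<subseteq> V"
      unfolding U_def using walks walk_subset_vertices[OF _ V(1)] by (meson Un_least)
    show "F \<subseteq> E"
      unfolding F_def using walks path_edges_subset by (meson Un_least)
    show "e \<subseteq> U" if "e \<in> F" for e
      using that path_edge_subset_set unfolding F_def U_def by blast
    show "{u, v, w} \<subseteq> U"
      unfolding U_def using walk_endpoints_in_set[OF walks(1)] walk_endpoints_in_set[OF walks(2)]
        walk_endpoints_in_set[OF walks(3)] by blast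
    show "\<exists>p. walk F p y z" if yz: "y \<in> U" "z \<in> U" for y z
    proof -
      obtain p q where "walk F p x y" "walk F q x z"
        using reach[OF yz(1)] reach[OF yz(2)] by blast
      then have "walk F (rev p @ tl q) y z"
        by (blast intro: walk_append walk_rev)
      then show ?thesis ..
    qed
  qed
  then have "steiner_dist V E {u, v, w} \<le> card F"
    by (rule steiner_dist_le)
  also have "\<dots> \<le> card (path_edges A) + card (path_edges B) + card (path_edges C)"
    unfolding F_def by (meson card_Un_le add_right_mono order_trans)
  also have "\<dots> \<le> dist E x u + dist E x v + dist E x w"
    using card_path_edges_le[of A] card_path_edges_le[of B] card_path_edges_le[of C]
      length_shortest_path[OF A] length_shortest_path[OF B] length_shortest_path[OF C] by simp
  finally show ?thesis .
qed

lemma steiner_dist_triple_ge: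
  assumes "u \<in> V" "v \<in> V" "w \<in> V"
  obtains x where "x \<in> V" "dist E x u + dist E x v + dist E x w \<le> steiner_dist V E {u, v, w}"
proof -
  have "{u, v, w} \<subseteq> V"
    using assms by simp
  then obtain U F where UF: "steiner_subgraph U F {u, v, w}" "card F = steiner_dist V E {u, v, w}"
    by (rule steiner_dist_attained)
  have F: "finite F" "F \<subseteq> E"
    using UF(1) finite_subset[OF _ finite_edges] unfolding steiner_subgraph_def by auto
  have "u \<in> U" "v \<in> U" "w \<in> U" and conn: "\<forall>y\<in>U. \<forall>z\<in>U. \<exists>p. walk F p y z"
    using UF(1) unfolding steiner_subgraph_def by auto
  then obtain p q where p: "walk F p u v" and q: "walk F q w v"
    by meson
  obtain x where "x \<in> set p" "dist E x u + dist E x v + dist E x w \<le> card F"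
    using card_ge_dist_sum_via_walks[OF F p q] by blast
  moreover have "x \<in> V"
    using walk_subset_vertices[OF walk_mono[OF F(2) p] assms(1)] \<open>x \<in> set p\<close>
    by blast
  ultimately show ?thesis
    using that UF(2) by simp
qed

definition has_median :: "'a \<Rightarrow> 'a \<Rightarrow> 'a \<Rightarrow> bool" where
  "has_median u v w \<longleftrightarrow> (\<exists>x\<in>V. dist E u x + dist E x v = dist E u v \<and>
     dist E v x + dist E x w = dist E v w \<and> dist E u x + dist E x w = dist E u w)"

lemma perimeter_le_twice_steiner_dist:
  assumes "u \<in> V" "v \<in> V" "w \<in> V"
  shows "dist E u v + dist E v w + dist E u w \<le> 2 * steiner_dist V E {u, v, w}"
proof -
  obtain x where x: "x \<in> V" "dist E x u + dist E x v + dist E x w \<le> steiner_dist V E {u, v, w}"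
    using steiner_dist_triple_ge[OF assms] .
  have "dist E u v \<le> dist E x u + dist E x v" "dist E v w \<le> dist E x v + dist E x w"
    "dist E u w \<le> dist E x u + dist E x w"
    using dist_triangle_vertices[OF _ x(1)] assms graph_dist_commute[of E x] by metis+
  with x(2) show ?thesis by linarith
qed

lemma twice_steiner_dist_eq_perimeter_iff:
  assumes "u \<in> V" "v \<in> V" "w \<in> V"
  shows "2 * steiner_dist V E {u, v, w} = dist E u v + dist E v w + dist E u w \<longleftrightarrow>
    has_median u v w"
proof
  assume eq: "2 * steiner_dist V E {u, v, w} = dist E u v + dist E v w + dist E u w"
  obtain x where x: "x \<in> V" "dist E x u + dist E x v + dist E x w \<le> steiner_dist V E {u, v, w}"
    using steiner_dist_triple_ge[OF assms] .
  have "dist E u v \<le> dist E u x + dist E x v" "dist E v w \<le> dist E v x + dist E x w"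
    "dist E u w \<le> dist E u x + dist E x w"
    using dist_triangle_vertices[OF _ x(1)] assms by blast+
  with x eq show "has_median u v w"
    unfolding has_median_def using graph_dist_commute[of E x] by (intro bexI[of _ x]) auto
next
  assume "has_median u v w"
  then obtain x where x: "x \<in> V" "dist E u x + dist E x v = dist E u v"
    "dist E v x + dist E x w = dist E v w" "dist E u x + dist E x w = dist E u w"
    unfolding has_median_def by blast
  have "steiner_dist V E {u, v, w} \<le> dist E x u + dist E x v + dist E x w"
    using steiner_dist_triple_le[OF x(1) assms] .
  with x perimeter_le_twice_steiner_dist[OF assms] show
    "2 * steiner_dist V E {u, v, w} = dist E u v + dist E v w + dist E u w"
    using graph_dist_commute[of E x] by auto
qed

text \<open>The Steiner distance minus half the perimeter; the double sum counts ordered pairs.\<close>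
definition steiner_excess :: "'a set \<Rightarrow> real" where
  "steiner_excess S = real (steiner_dist V E S) - (\<Sum>a\<in>S. \<Sum>b\<in>S. real (dist E a b)) / 4"

lemma steiner_excess_triple:
  assumes "u \<noteq> v" "v \<noteq> w" "u \<noteq> w"
  shows "steiner_excess {u, v, w} =
    real (steiner_dist V E {u, v, w}) - real (dist E u v + dist E v w + dist E u w) / 2"
  unfolding steiner_excess_def pair_sum_triple[OF assms] by simp

lemma steiner_excess_nonneg:
  assumes "S \<subseteq> V" "card S = 3"
  shows "0 \<le> steiner_excess S"
proof -
  obtain u v w where S: "S = {u, v, w}" "u \<noteq> v" "v \<noteq> w" "u \<noteq> w"
    using assms(2) by (auto simp: card_3_iff)
  with assms(1) have "dist E u v + dist E v w + dist E u w \<le> 2 * steiner_dist V E {u, v, w}"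
    by (intro perimeter_le_twice_steiner_dist) auto
  then have "real (dist E u v + dist E v w + dist E u w) \<le> 2 * real (steiner_dist V E {u, v, w})"
    by linarith
  then show ?thesis
    unfolding S(1) steiner_excess_triple[OF S(2-4)] by (simp add: field_simps)
qed

lemma steiner_excess_eq_0_iff:
  assumes "u \<in> V" "v \<in> V" "w \<in> V" "u \<noteq> v" "v \<noteq> w" "u \<noteq> w"
  shows "steiner_excess {u, v, w} = 0 \<longleftrightarrow> has_median u v w"
proof -
  have "steiner_excess {u, v, w} = 0 \<longleftrightarrow>
      real (2 * steiner_dist V E {u, v, w}) = real (dist E u v + dist E v w + dist E u w)"
    unfolding steiner_excess_triple[OF assms(4-6)] by (simp add: field_simps)
  also have "\<dots> \<longleftrightarrow> has_median u v w"
    unfolding of_nat_eq_iff by (rule twice_steiner_dist_eq_perimeter_iff[OF assms(1-3)])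
  finally show ?thesis .
qed

lemma wiener3_minus_wiener:
  "wiener3 V E - (real (card V) - 2) / 2 * wiener V E =
    (\<Sum>S\<in>{S. S \<subseteq> V \<and> card S = 3}. steiner_excess S)"
  using sum_triples_pair_sums[OF finite_vertices, of "\<lambda>a b. real (dist E a b)"]
  unfolding wiener3_def wiener_def steiner_excess_def
  by (simp add: sum_subtractf sum_divide_distrib[symmetric])

end

section \<open>Medians and disjoint geodesic triangles\<close>

lemma twice_max_less_sum_iff:
  "2 * max a (max b c) < a + b + (c :: nat) \<longleftrightarrow> a < b + c \<and> b < a + c \<and> c < a + b"
  by (auto simp: max_def)

context connected_simple_graph
begin

definition disjoint_geodesic_triangle :: "'a \<Rightarrow> 'a \<Rightarrow> 'a \<Rightarrow> bool" where
  "disjoint_geodesic_triangle u v w \<longleftrightarrow> u \<noteq> v \<and> v \<noteq> w \<and> u \<noteq> w \<and>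
     2 * max (dist E u v) (max (dist E u w) (dist E v w))
       < dist E u v + dist E u w + dist E v w \<and>
     (\<forall>P Q R. shortest_path E P u v \<longrightarrow> shortest_path E Q v w \<longrightarrow> shortest_path E R w u \<longrightarrow>
        path_edges P \<inter> path_edges Q = {} \<and> path_edges Q \<inter> path_edges R = {} \<and>
        path_edges P \<inter> path_edges R = {})"

lemma has_median_swap12: "has_median u v w \<longleftrightarrow> has_median v u w"
proof -
  have "dist E u x + dist E x v = dist E v x + dist E x u" for x
    using graph_dist_commute[of E u x] graph_dist_commute[of E x v] by simp
  then show ?thesis
    unfolding has_median_def using graph_dist_commute[of E u v] by auto
qed

lemma has_median_swap23: "has_median u v w \<longleftrightarrow> has_median u w v"
proof -
  have "dist E v x + dist E x w = dist E w x + dist E x v" for x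
    using graph_dist_commute[of E v x] graph_dist_commute[of E x w] by simp
  then show ?thesis
    unfolding has_median_def using graph_dist_commute[of E v w] by auto
qed

text \<open>If some distance is at least half the perimeter, the triangle inequality makes it the sum
  of the other two, and the vertex these share is a median.\<close>
lemma has_median_if_perimeter_le:
  assumes V: "u \<in> V" "v \<in> V" "w \<in> V"
    and le: "dist E u v + dist E u w + dist E v w \<le>
      2 * max (dist E u v) (max (dist E u w) (dist E v w))"
  shows "has_median u v w"
proof -
  have tri: "dist E u v \<le> dist E u w + dist E w v" "dist E u w \<le> dist E u v + dist E v w"
    "dist E v w \<le> dist E v u + dist E u w"
    using dist_triangle_vertices V by blast+
  have sym: "dist E v u = dist E u v" "dist E w u = dist E u w" "dist E w v = dist E v w"
    by (rule graph_dist_commute)+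
  consider "dist E u w + dist E v w \<le> dist E u v" | "dist E u v + dist E v w \<le> dist E u w"
    | "dist E u v + dist E u w \<le> dist E v w"
    using le twice_max_less_sum_iff[of "dist E u v" "dist E u w" "dist E v w"] by linarith
  then show ?thesis
  proof cases
    case 1
    then show ?thesis
      unfolding has_median_def using V tri sym by (intro bexI[of _ w]) auto
  next
    case 2
    then show ?thesis
      unfolding has_median_def using V tri sym by (intro bexI[of _ v]) auto
  next
    case 3
    then show ?thesis
      unfolding has_median_def using V tri sym by (intro bexI[of _ u]) auto
  qed
qed

lemma has_median_degenerate:
  assumes V: "u \<in> V" "v \<in> V" "w \<in> V" and "u = v \<or> v = w \<or> u = w"
  shows "has_median u v w"
proof -
  have "\<not> 2 * max (dist E u v) (max (dist E u w) (dist E v w)) <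
      dist E u v + dist E u w + dist E v w"
    using assms(4) graph_dist_commute[of E w u] unfolding twice_max_less_sum_iff by auto
  then show ?thesis
    using has_median_if_perimeter_le[OF V] by linarith
qed

lemma has_median_if_on_geodesics:
  assumes V: "s \<in> V" "t \<in> V" "t' \<in> V" "a \<in> V"
    and a: "dist E s a + dist E a t = dist E s t" "dist E s a + dist E a t' = dist E s t'"
    and "has_median a t t'"
  shows "has_median s t t'"
proof -
  obtain x where x: "x \<in> V" "dist E a x + dist E x t = dist E a t"
    "dist E t x + dist E x t' = dist E t t'" "dist E a x + dist E x t' = dist E a t'"
    using assms(7) unfolding has_median_def by blast
  have "dist E s x \<le> dist E s a + dist E a x"
    using dist_triangle_vertices[OF V(1,4) x(1)] .
  moreover have "dist E s t \<le> dist E s x + dist E x t" "dist E s t' \<le> dist E s x + dist E x t'"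
    using dist_triangle_vertices[OF V(1) x(1)] V(2,3) by blast+
  ultimately show ?thesis
    unfolding has_median_def using x a by (intro bexI[of _ x]) auto
qed

text \<open>Moving the corner u to the far end a of an edge shared by two geodesics from u keeps the
  triple median-free and shortens the perimeter by 2 dist u a.\<close>
lemma smaller_median_free_triangle:
  assumes V: "u \<in> V" "v \<in> V" "w \<in> V" and no_median: "\<not> has_median u v w"
    and P: "shortest_path E P u v" and Q: "shortest_path E Q u w"
    and common: "path_edges P \<inter> path_edges Q \<noteq> {}"
  obtains a where "a \<in> V" "\<not> has_median a v w"
    "dist E a v + dist E v w + dist E a w < dist E u v + dist E v w + dist E u w"
proof -
  obtain e where "e \<in> path_edges P" "e \<in> path_edges Q"
    using common by blast
  then obtain a where a: "a \<in> set P" "a \<noteq> u"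
    "dist E u a + dist E a v = dist E u v" "dist E u a + dist E a w = dist E u w"
    using shortest_paths_common_edge[OF P Q] by blast
  have "a \<in> V"
    using a(1) walk_subset_vertices[OF shortest_path_walk[OF P] V(1)] by blast
  moreover have "\<not> has_median a v w"
    using has_median_if_on_geodesics[OF V \<open>a \<in> V\<close> a(3,4)] no_median by blast
  moreover have "dist E u a \<noteq> 0"
    using dist_eq_0_iff_vertices[OF V(1) \<open>a \<in> V\<close>] a(2) by simp
  ultimately show ?thesis
    using that a(3,4) by simp
qed

lemma median_free_triangle_descent:
  assumes V: "u \<in> V" "v \<in> V" "w \<in> V" and no_median: "\<not> has_median u v w"
    and not_disjoint: "\<not> disjoint_geodesic_triangle u v w"
  obtains a b c where "a \<in> V" "b \<in> V" "c \<in> V" "\<not> has_median a b c"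
    "dist E a b + dist E b c + dist E a c < dist E u v + dist E v w + dist E u w"
proof -
  have "u \<noteq> v" "v \<noteq> w" "u \<noteq> w"
    using has_median_degenerate[OF V] no_median by blast+
  moreover have "2 * max (dist E u v) (max (dist E u w) (dist E v w)) <
      dist E u v + dist E u w + dist E v w"
    using has_median_if_perimeter_le[OF V] no_median by linarith
  ultimately obtain P Q R where P: "shortest_path E P u v" and Q: "shortest_path E Q v w"
    and R: "shortest_path E R w u"
    and "path_edges P \<inter> path_edges Q \<noteq> {} \<or> path_edges Q \<inter> path_edges R \<noteq> {} \<or>
      path_edges P \<inter> path_edges R \<noteq> {}"
    using not_disjoint unfolding disjoint_geodesic_triangle_def by blast
  then consider "path_edges (rev P) \<inter> path_edges Q \<noteq> {}"
    | "path_edges (rev Q) \<inter> path_edges R \<noteq> {}" | "path_edges P \<inter> path_edges (rev R) \<noteq> {}"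
    by auto
  then show ?thesis
  proof cases
    case 1
    have "\<not> has_median v u w"
      using no_median has_median_swap12 by blast
    from smaller_median_free_triangle[OF V(2,1,3) this shortest_path_rev[OF P] Q 1]
    obtain a where "a \<in> V" "\<not> has_median a u w"
      "dist E a u + dist E u w + dist E a w < dist E v u + dist E u w + dist E v w" .
    then show ?thesis
      using that[of a u w] V graph_dist_commute[of E u v] by simp
  next
    case 2
    have "\<not> has_median w v u"
      using no_median has_median_swap12 has_median_swap23 by blast
    from smaller_median_free_triangle[OF V(3,2,1) this shortest_path_rev[OF Q] R 2]
    obtain a where "a \<in> V" "\<not> has_median a v u"
      "dist E a v + dist E v u + dist E a u < dist E w v + dist E v u + dist E w u" .
    then show ?thesis
      using that[of a v u] V graph_dist_commute[of E u v] graph_dist_commute[of E u w]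
        graph_dist_commute[of E v w] by simp
  next
    case 3
    from smaller_median_free_triangle[OF V no_median P shortest_path_rev[OF R] 3]
    obtain a where "a \<in> V" "\<not> has_median a v w"
      "dist E a v + dist E v w + dist E a w < dist E u v + dist E v w + dist E u w" .
    then show ?thesis
      using that[of a v w] V by simp
  qed
qed

lemma median_free_imp_disjoint_geodesic_triangle:
  assumes "u \<in> V" "v \<in> V" "w \<in> V" "\<not> has_median u v w"
  shows "\<exists>x\<in>V. \<exists>y\<in>V. \<exists>z\<in>V. disjoint_geodesic_triangle x y z"
  using assms
proof (induction "dist E u v + dist E v w + dist E u w" arbitrary: u v w rule: less_induct)
  case less
  show ?case
  proof (cases "disjoint_geodesic_triangle u v w")
    case False
    with less.prems obtain a b c where "a \<in> V" "b \<in> V" "c \<in> V" "\<not> has_median a b c"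
      "dist E a b + dist E b c + dist E a c < dist E u v + dist E v w + dist E u w"
      by (rule median_free_triangle_descent)
    then show ?thesis
      using less.hyps by blast
  qed (use less.prems in blast)
qed

text \<open>A median x of a disjoint geodesic triangle would be distinct from its corners, and the
  geodesics u-x-v and v-x-w would share the first edge of a geodesic from x to v.\<close>
lemma disjoint_geodesic_triangle_imp_median_free:
  assumes V: "u \<in> V" "v \<in> V" "w \<in> V" and triangle: "disjoint_geodesic_triangle u v w"
  shows "\<not> has_median u v w"
proof
  assume "has_median u v w"
  then obtain x where x: "x \<in> V" "dist E u x + dist E x v = dist E u v"
      "dist E v x + dist E x w = dist E v w" "dist E u x + dist E x w = dist E u w"
    unfolding has_median_def by blast
  have strict: "2 * max (dist E u v) (max (dist E u w) (dist E v w)) <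
      dist E u v + dist E u w + dist E v w"
    and disjoint: "\<And>P Q R. shortest_path E P u v \<Longrightarrow> shortest_path E Q v w \<Longrightarrow>
      shortest_path E R w u \<Longrightarrow> path_edges P \<inter> path_edges Q = {}"
    using triangle unfolding disjoint_geodesic_triangle_def by blast+
  have "x \<noteq> v"
    using strict x(4) by (auto simp: twice_max_less_sum_iff)
  obtain A where A: "shortest_path E A u x"
    using shortest_path_obtain[OF V(1) x(1)] .
  obtain B where B: "shortest_path E B x v"
    using shortest_path_obtain[OF x(1) V(2)] .
  obtain C where C: "shortest_path E C x w"
    using shortest_path_obtain[OF x(1) V(3)] .
  obtain R where R: "shortest_path E R w u"
    using shortest_path_obtain[OF V(3,1)] .
  have P: "shortest_path E (A @ tl B) u v"
    using shortest_path_append[OF A B x(2)] .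
  have Q: "shortest_path E (rev B @ tl C) v w"
    using shortest_path_append[OF shortest_path_rev[OF B] C] x(3) graph_dist_commute[of E x v]
    by simp
  have "path_edges B \<subseteq> path_edges (A @ tl B)" "path_edges (rev B) \<subseteq> path_edges (rev B @ tl C)"
    using path_edges_append_tl[OF shortest_path_walk[OF A] shortest_path_walk[OF B]]
      path_edges_append_tl[OF walk_rev[OF shortest_path_walk[OF B]] shortest_path_walk[OF C]]
    by blast+
  moreover have "path_edges B \<noteq> {}"
  proof -
    have "dist E x v \<noteq> 0"
      using dist_eq_0_iff_vertices[OF x(1) V(2)] \<open>x \<noteq> v\<close> by simp
    then have "Suc 0 < length B"
      using length_shortest_path[OF B] by simp
    then show ?thesis
      unfolding path_edges_def by blast
  qed
  ultimately show False
    using disjoint[OF P Q R] by auto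
qed

lemma all_medians_iff_no_disjoint_geodesic_triangle:
  "(\<forall>u\<in>V. \<forall>v\<in>V. \<forall>w\<in>V. has_median u v w) \<longleftrightarrow>
    \<not> (\<exists>u\<in>V. \<exists>v\<in>V. \<exists>w\<in>V. disjoint_geodesic_triangle u v w)"
  using median_free_imp_disjoint_geodesic_triangle disjoint_geodesic_triangle_imp_median_free
  by blast

lemma steiner_excess_zero_iff_all_medians:
  "(\<forall>S\<in>{S. S \<subseteq> V \<and> card S = 3}. steiner_excess S = 0) \<longleftrightarrow>
    (\<forall>u\<in>V. \<forall>v\<in>V. \<forall>w\<in>V. has_median u v w)"
proof
  assume zero: "\<forall>S\<in>{S. S \<subseteq> V \<and> card S = 3}. steiner_excess S = 0"
  show "\<forall>u\<in>V. \<forall>v\<in>V. \<forall>w\<in>V. has_median u v w"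
  proof (intro ballI)
    fix u v w assume V: "u \<in> V" "v \<in> V" "w \<in> V"
    show "has_median u v w"
    proof (cases "u \<noteq> v \<and> v \<noteq> w \<and> u \<noteq> w")
      case True
      then have "steiner_excess {u, v, w} = 0"
        using zero V by auto
      with True show ?thesis
        using steiner_excess_eq_0_iff V by blast
    next
      case False
      then show ?thesis
        using has_median_degenerate[OF V] by blast
    qed
  qed
next
  assume all: "\<forall>u\<in>V. \<forall>v\<in>V. \<forall>w\<in>V. has_median u v w"
  show "\<forall>S\<in>{S. S \<subseteq> V \<and> card S = 3}. steiner_excess S = 0"
  proof
    fix S assume "S \<in> {S. S \<subseteq> V \<and> card S = 3}"
    then obtain u v w where "S = {u, v, w}" "u \<noteq> v" "v \<noteq> w" "u \<noteq> w" "S \<subseteq> V"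
      by (auto simp: card_3_iff)
    with all show "steiner_excess S = 0"
      using steiner_excess_eq_0_iff by auto
  qed
qed

end

theorem theorem4:
  fixes V :: "'a set" and E :: "'a set set"
  assumes "simple_graph V E" and "connected_graph V E" and "card V \<ge> 3"
  shows "wiener3 V E \<ge> (real (card V) - 2) / 2 * wiener V E \<and>
    (wiener3 V E = (real (card V) - 2) / 2 * wiener V E \<longleftrightarrow>
      \<not> (\<exists>u\<in>V. \<exists>v\<in>V. \<exists>w\<in>V. u \<noteq> v \<and> v \<noteq> w \<and> u \<noteq> w \<and>
          2 * max (dist E u v) (max (dist E u w) (dist E v w))
            < dist E u v + dist E u w + dist E v w \<and>
          (\<forall>P Q R. shortest_path E P u v \<longrightarrow> shortest_path E Q v w \<longrightarrow> shortest_path E R w u \<longrightarrow>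
             path_edges P \<inter> path_edges Q = {} \<and> path_edges Q \<inter> path_edges R = {} \<and>
             path_edges P \<inter> path_edges R = {})))"
proof -
  interpret connected_simple_graph V E
    using assms(1,2) by unfold_locales
  let ?T = "{S. S \<subseteq> V \<and> card S = 3}"
  have gap: "wiener3 V E - (real (card V) - 2) / 2 * wiener V E = sum steiner_excess ?T"
    by (rule wiener3_minus_wiener)
  have finite: "finite ?T"
    using finite_vertices by (auto intro: finite_subset[of _ "Pow V"])
  have nonneg: "\<And>S. S \<in> ?T \<Longrightarrow> 0 \<le> steiner_excess S"
    using steiner_excess_nonneg by blast
  have "0 \<le> sum steiner_excess ?T"
    by (rule sum_nonneg) (rule nonneg)
  with gap have "(real (card V) - 2) / 2 * wiener V E \<le> wiener3 V E"
    by linarith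
  moreover have "wiener3 V E = (real (card V) - 2) / 2 * wiener V E \<longleftrightarrow> (\<forall>S\<in>?T. steiner_excess S = 0)"
    unfolding eq_iff_diff_eq_0[of "wiener3 V E"] gap by (rule sum_nonneg_eq_0_iff[OF finite nonneg])
  ultimately show ?thesis
    using steiner_excess_zero_iff_all_medians all_medians_iff_no_disjoint_geodesic_triangle
    unfolding disjoint_geodesic_triangle_def by simp
qed

end
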